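(* Let $A\subset\omega$ be co-infinite and let $u_0,\dots,u_n\in\mathcal M$ be such that $\bigcup_{k=0}^nu_k(A)$ is co-infinite. Then there exists $\chi\in\mathcal M_A$ such that $\bigcup_{k=0}^n\mathrm{im}(u_k\chi)$ is co-infinite.
   Context: $\omega=\{1,2,\dots\}$, $\mathcal M$ the monoid of injections $\omega\to\omega$, and $\mathcal M_A$ the submonoid of injections fixing $A\subset\omega$ elementwise. A subset of $\omega$ is co-infinite if its complement in $\omega$ is infinite. *)

theory Defs
  imports Main
begin

definition omega :: "nat set" where
  "omega = {n. 1 \<le> n}"

text \<open>The monoid of injections omega to omega (functions considered on omega only).\<close>
definition injM :: "(nat \<Rightarrow> nat) set" where
  "injM = {f. inj_on f omega \<and> f ` omega \<subseteq> omega}"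

definition injM_fix :: "nat set \<Rightarrow> (nat \<Rightarrow> nat) set" where
  "injM_fix A = {f \<in> injM. \<forall>a\<in>A. f a = a}"

definition coinfinite :: "nat set \<Rightarrow> bool" where
  "coinfinite S \<longleftrightarrow> infinite (omega - S)"

end

theory Submission
  imports Defs "HOL-Library.Infinite_Set"
begin

text \<open>Split \<open>\<omega> - \<Union>\<^sub>k u\<^sub>k(A)\<close> into \<open>n + 2\<close> infinite classes. Each point \<open>b\<close> of the
  infinite set \<open>\<omega> - A\<close> has at most \<open>n + 1\<close> images \<open>u\<^sub>k(b)\<close>, so it misses one of the classes;
  by pigeonhole, infinitely many such \<open>b\<close>, forming a set \<open>C\<close>, miss the same class \<open>W\<close>.
  Let \<open>\<chi>\<close> be the identity on \<open>A\<close> and an injection of \<open>\<omega> - A\<close> into \<open>C\<close>. Then the sets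
  \<open>u\<^sub>k(\<chi>(\<omega>)) \<subseteq> u\<^sub>k(A) \<union> u\<^sub>k(C)\<close> all miss the infinite set \<open>W\<close>.\<close>

lemma infinite_mod_class:
  assumes "j < (m::nat)"
  shows "infinite {i. i mod m = j}"
  unfolding infinite_nat_iff_unbounded_le
proof
  fix N
  have "N \<le> j + m * N" using assms by (simp add: Suc_leI trans_le_add2)
  moreover have "(j + m * N) mod m = j" using assms by simp
  ultimately show "\<exists>i\<ge>N. i \<in> {i. i mod m = j}" by blast
qed

lemma infinite_imp_ex_infinite_classes:
  assumes "infinite S"
  shows "\<exists>g :: 'a \<Rightarrow> nat. \<forall>j<m. infinite {x \<in> S. g x = j}"
proof -
  obtain f :: "nat \<Rightarrow> 'a" where "inj f" "range f \<subseteq> S"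
    using infinite_countable_subset[OF assms] by blast
  show ?thesis
  proof (intro exI[of _ "\<lambda>x. inv f x mod m"] allI impI)
    fix j assume "j < m"
    show "infinite {x \<in> S. inv f x mod m = j}"
    proof (rule infinite_super)
      show "f ` {i. i mod m = j} \<subseteq> {x \<in> S. inv f x mod m = j}"
        using \<open>inj f\<close> \<open>range f \<subseteq> S\<close> by auto
      show "infinite (f ` {i. i mod m = j})"
        using infinite_mod_class[OF \<open>j < m\<close>] \<open>inj f\<close> by (simp add: finite_image_iff inj_on_subset)
    qed
  qed
qed

lemma ex_infinite_subsets_avoiding_images:
  fixes u :: "nat \<Rightarrow> 'a \<Rightarrow> 'b"
  assumes "infinite B" and "infinite W\<^sub>0"
  shows "\<exists>C W. C \<subseteq> B \<and> infinite C \<and> W \<subseteq> W\<^sub>0 \<and> infinite W \<and> (\<forall>k\<le>n. u k ` C \<inter> W = {})"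
proof -
  obtain g where g: "\<forall>j<n + 2. infinite {w \<in> W\<^sub>0. g w = j}"
    using infinite_imp_ex_infinite_classes[OF assms(2)] by blast
  define labels where "labels b = (\<lambda>k. g (u k b)) ` {..n}" for b
  have "\<not> {..<n + 2} \<subseteq> labels b" for b
  proof
    assume "{..<n + 2} \<subseteq> labels b"
    then have "n + 2 \<le> card (labels b)"
      using card_mono[of "labels b" "{..<n + 2}"] by (simp add: labels_def)
    moreover have "card (labels b) \<le> n + 1"
      using card_image_le[of "{..n}"] by (simp add: labels_def)
    ultimately show False by simp
  qed
  then have "B = (\<Union>j<n + 2. {b \<in> B. j \<notin> labels b})"
    by (auto simp: subset_eq)
  then have "infinite (\<Union>j<n + 2. {b \<in> B. j \<notin> labels b})"
    using assms(1) by simp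
  then obtain j where "j < n + 2" and C: "infinite {b \<in> B. j \<notin> labels b}"
    by blast
  show ?thesis
  proof (intro exI conjI)
    show "{b \<in> B. j \<notin> labels b} \<subseteq> B" and "{w \<in> W\<^sub>0. g w = j} \<subseteq> W\<^sub>0"
      by auto
    show "infinite {w \<in> W\<^sub>0. g w = j}"
      using g \<open>j < n + 2\<close> by blast
    show "\<forall>k\<le>n. u k ` {b \<in> B. j \<notin> labels b} \<inter> {w \<in> W\<^sub>0. g w = j} = {}"
      by (auto simp: labels_def)
  qed (fact C)
qed

lemma ex_injM_fix_image_subset:
  assumes "A \<subseteq> omega" "C \<subseteq> omega" "A \<inter> C = {}" "infinite C"
  shows "\<exists>\<chi>\<in>injM_fix A. \<chi> ` omega \<subseteq> A \<union> C"
proof -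
  define \<chi> where "\<chi> x = (if x \<in> A then x else enumerate C x)" for x
  have into_C: "enumerate C x \<in> C" for x
    using enumerate_in_set[OF assms(4)] .
  then have not_A: "enumerate C x \<notin> A" for x
    using assms(3) by blast
  have inj_enum: "inj (enumerate C)"
    using strict_mono_enumerate[OF assms(4)] strict_mono_imp_inj_on by blast
  have "inj_on \<chi> omega"
    by (rule inj_onI) (auto simp: \<chi>_def inj_eq[OF inj_enum] not_A split: if_split_asm)
  moreover have "\<chi> ` omega \<subseteq> omega" and "\<forall>a\<in>A. \<chi> a = a"
    using into_C assms(1,2) by (auto simp: \<chi>_def)
  moreover have "\<chi> ` omega \<subseteq> A \<union> C"
    using into_C by (auto simp: \<chi>_def)
  ultimately show ?thesis
    unfolding injM_fix_def injM_def by blast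
qed

theorem proposition2p7:
  fixes A :: "nat set" and u :: "nat \<Rightarrow> nat \<Rightarrow> nat" and n :: nat
  assumes "A \<subseteq> omega"
    and "coinfinite A"
    and "\<forall>k\<le>n. u k \<in> injM"
    and "coinfinite (\<Union>k\<le>n. u k ` A)"
  shows "\<exists>\<chi>\<in>injM_fix A. coinfinite (\<Union>k\<le>n. (u k \<circ> \<chi>) ` omega)"
proof -
  have "infinite (omega - A)" and "infinite (omega - (\<Union>k\<le>n. u k ` A))"
    using assms(2,4) unfolding coinfinite_def by auto
  from ex_infinite_subsets_avoiding_images[OF this, of n u]
  obtain C W where C: "C \<subseteq> omega - A" "infinite C"
    and W: "W \<subseteq> omega - (\<Union>k\<le>n. u k ` A)" "infinite W"
    and avoid: "\<forall>k\<le>n. u k ` C \<inter> W = {}"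
    by (elim exE conjE) (rule that)
  have "C \<subseteq> omega" and "A \<inter> C = {}"
    using C(1) by auto
  from ex_injM_fix_image_subset[OF assms(1) this C(2)]
  obtain \<chi> where \<chi>: "\<chi> \<in> injM_fix A" "\<chi> ` omega \<subseteq> A \<union> C"
    by (elim bexE) (rule that)
  have "W \<subseteq> omega - (\<Union>k\<le>n. (u k \<circ> \<chi>) ` omega)"
  proof
    fix w assume "w \<in> W"
    have "w \<notin> (u k \<circ> \<chi>) ` omega" if "k \<le> n" for k
    proof
      assume "w \<in> (u k \<circ> \<chi>) ` omega"
      then obtain x where "x \<in> A \<union> C" "w = u k x"
        using \<chi>(2) by auto
      then show False
        using \<open>w \<in> W\<close> W(1) avoid that by blast
    qed
    then show "w \<in> omega - (\<Union>k\<le>n. (u k \<circ> \<chi>) ` omega)"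
      using \<open>w \<in> W\<close> W(1) by auto
  qed
  then have "coinfinite (\<Union>k\<le>n. (u k \<circ> \<chi>) ` omega)"
    unfolding coinfinite_def using W(2) infinite_super by blast
  with \<chi>(1) show ?thesis by blast
qed

end
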